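(* Let $d\ge2$ be an integer, $X,Y$ disjoint finite sets with $|X|=m$, $|Y|=n$, and $\Gamma$ a symmetric matrix indexed by $X\cup Y$ with entries in $\mathbb{Z}_d$ and zero diagonal. Let $f\ge0$ be an integer and suppose that for every subset $Z\subset Y$ with $|Z|\le 2f$ the $(Y\setminus Z)\times(X\cup Z)$-submatrix of $\Gamma$ is non-singular over $\mathbb{Z}_d$, i.e. $\sum_{x\in X\cup Z}\Gamma_{yx}h_x\equiv0 \pmod d$ for all $y\in Y\setminus Z$ implies $h_x\equiv0\pmod d$ for all $x\in X\cup Z$. Then the graph code $V_\Gamma:\mathcal{H}_X\to\mathcal{H}_Y$ corrects $f$ errors.
   Context: For each $x\in X\cup Y$ let $\mathcal{H}_x\cong\mathbb{C}^d$ with orthonormal basis $|j\rangle$, $j\in\mathbb{Z}_d$; $\mathcal{H}_W=\bigotimes_{x\in W}\mathcal{H}_x$ with product basis $|j_W\rangle$. The graph code $V_\Gamma:\mathcal{H}_X\to\mathcal{H}_Y$ is defined by $\langle j_Y|V_\Gamma|j_X\rangle=d^{-n/2}\exp\bigl(\frac{i\pi}{d}\sum_{x,y\in X\cup Y}j_x\Gamma_{xy}j_y\bigr)$. Identify $\mathcal{H}_Y$ with $\mathcal{H}^{\otimes n}$, $\mathcal{H}=\mathbb{C}^d$. Let $\mathcal{E}_f$ be the linear span of all operators $A_1\otimes\cdots\otimes A_n$ on $\mathcal{H}^{\otimes n}$ with $A_i\ne\mathbb{1}$ for at most $f$ indices $i$. A linear map $V:\mathcal{H}_X\to\mathcal{H}^{\otimes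 n}$ corrects $f$ errors if it satisfies the Knill–Laflamme condition for $\mathcal{E}_f$: for all $F_1,F_2\in\mathcal{E}_f$ there is a number $\omega(F_1^*F_2)$ such that $\langle V\phi_1,F_1^*F_2V\phi_2\rangle=\langle\phi_1,\phi_2\rangle\,\omega(F_1^*F_2)$ for all $\phi_1,\phi_2\in\mathcal{H}_X$. *)

theory Defs
  imports Complex_Main
begin

text \<open>Basis labels of H_W: configurations j : W -> Z_d, encoded as functions
  'a => nat with values < d on W and 0 outside W (extensional).\<close>
definition confs :: "nat \<Rightarrow> 'a set \<Rightarrow> ('a \<Rightarrow> nat) set" where
  "confs d W = {j. (\<forall>x\<in>W. j x < d) \<and> (\<forall>x. x \<notin> W \<longrightarrow> j x = 0)}"

definition inner_W :: "nat \<Rightarrow> 'a set \<Rightarrow> (('a \<Rightarrow> nat) \<Rightarrow> complex) \<Rightarrow> (('a \<Rightarrow> nat) \<Rightarrow> complex) \<Rightarrow> complex" where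
  "inner_W d W u v = (\<Sum>j\<in>confs d W. cnj (u j) * v j)"

text \<open>Matrix element <j_Y | V_Gamma | j_X>, n = |Y|.\<close>
definition graph_code_kernel :: "nat \<Rightarrow> 'a set \<Rightarrow> 'a set \<Rightarrow> ('a \<Rightarrow> 'a \<Rightarrow> int)
    \<Rightarrow> ('a \<Rightarrow> nat) \<Rightarrow> ('a \<Rightarrow> nat) \<Rightarrow> complex" where
  "graph_code_kernel d X Y \<Gamma> jY jX =
     (let j = (\<lambda>x. jX x + jY x) in
      complex_of_real (real d powr (- real (card Y) / 2)) *
      exp (\<i> * complex_of_real (pi / real d) *
           of_int (\<Sum>x\<in>X \<union> Y. \<Sum>y\<in>X \<union> Y. int (j x) * \<Gamma> x y * int (j y))))"

definition graph_code :: "nat \<Rightarrow> 'a set \<Rightarrow> 'a set \<Rightarrow> ('a \<Rightarrow> 'a \<Rightarrow> int)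
    \<Rightarrow> (('a \<Rightarrow> nat) \<Rightarrow> complex) \<Rightarrow> (('a \<Rightarrow> nat) \<Rightarrow> complex)" where
  "graph_code d X Y \<Gamma> \<phi> = (\<lambda>jY. \<Sum>jX\<in>confs d X. graph_code_kernel d X Y \<Gamma> jY jX * \<phi> jX)"

text \<open>Operators on H_Y are given by their matrix kernels F j' j (j, j' in confs d Y).\<close>
definition apply_op :: "nat \<Rightarrow> 'a set \<Rightarrow> (('a \<Rightarrow> nat) \<Rightarrow> ('a \<Rightarrow> nat) \<Rightarrow> complex)
    \<Rightarrow> (('a \<Rightarrow> nat) \<Rightarrow> complex) \<Rightarrow> (('a \<Rightarrow> nat) \<Rightarrow> complex)" where
  "apply_op d Y F v = (\<lambda>j'. \<Sum>j\<in>confs d Y. F j' j * v j)"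

definition adj_comp :: "nat \<Rightarrow> 'a set \<Rightarrow> (('a \<Rightarrow> nat) \<Rightarrow> ('a \<Rightarrow> nat) \<Rightarrow> complex)
    \<Rightarrow> (('a \<Rightarrow> nat) \<Rightarrow> ('a \<Rightarrow> nat) \<Rightarrow> complex) \<Rightarrow> (('a \<Rightarrow> nat) \<Rightarrow> ('a \<Rightarrow> nat) \<Rightarrow> complex)" where
  "adj_comp d Y F1 F2 = (\<lambda>a b. if a \<in> confs d Y \<and> b \<in> confs d Y
      then (\<Sum>c\<in>confs d Y. cnj (F1 c a) * F2 c b) else 0)"

definition is_id_mat :: "nat \<Rightarrow> (nat \<Rightarrow> nat \<Rightarrow> complex) \<Rightarrow> bool" where
  "is_id_mat d A \<longleftrightarrow> (\<forall>i<d. \<forall>k<d. A i k = (if i = k then 1 else 0))"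

definition tensor_op :: "'a set \<Rightarrow> ('a \<Rightarrow> nat \<Rightarrow> nat \<Rightarrow> complex)
    \<Rightarrow> (('a \<Rightarrow> nat) \<Rightarrow> ('a \<Rightarrow> nat) \<Rightarrow> complex)" where
  "tensor_op Y A = (\<lambda>j' j. \<Prod>y\<in>Y. A y (j' y) (j y))"

definition error_space :: "nat \<Rightarrow> 'a set \<Rightarrow> nat
    \<Rightarrow> (('a \<Rightarrow> nat) \<Rightarrow> ('a \<Rightarrow> nat) \<Rightarrow> complex) set" where
  "error_space d Y f = {F. \<exists>(N::nat) (c::nat \<Rightarrow> complex) (A::nat \<Rightarrow> 'a \<Rightarrow> nat \<Rightarrow> nat \<Rightarrow> complex).
      (\<forall>k<N. card {y\<in>Y. \<not> is_id_mat d (A k y)} \<le> f) \<and>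
      F = (\<lambda>j' j. \<Sum>k<N. c k * tensor_op Y (A k) j' j)}"

text \<open>Knill--Laflamme condition for V : H_X -> H_Y and the error space E_f.\<close>
definition corrects_errors :: "nat \<Rightarrow> 'a set \<Rightarrow> 'a set
    \<Rightarrow> ((('a \<Rightarrow> nat) \<Rightarrow> complex) \<Rightarrow> (('a \<Rightarrow> nat) \<Rightarrow> complex)) \<Rightarrow> nat \<Rightarrow> bool" where
  "corrects_errors d X Y V f \<longleftrightarrow>
     (\<exists>\<omega> :: (('a \<Rightarrow> nat) \<Rightarrow> ('a \<Rightarrow> nat) \<Rightarrow> complex) \<Rightarrow> complex.
        \<forall>F1\<in>error_space d Y f. \<forall>F2\<in>error_space d Y f. \<forall>\<phi>1 \<phi>2.
          inner_W d Y (V \<phi>1) (apply_op d Y (adj_comp d Y F1 F2) (V \<phi>2))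
            = inner_W d X \<phi>1 \<phi>2 * \<omega> (adj_comp d Y F1 F2))"

end

theory Submission
  imports Defs "HOL-Analysis.Complex_Transcendental"
begin

text \<open>Write a configuration of \<open>Y\<close> as \<open>u + s\<close> with \<open>u\<close> supported on \<open>W = Y - Z\<close> and \<open>s\<close> on \<open>Z\<close>.
  A tensor-product error acting trivially outside \<open>Z\<close> is diagonal in \<open>u\<close>, and the sum over \<open>u\<close> of
  a product of two matrix elements of \<open>V\<^sub>\<Gamma>\<close> is a character sum over \<open>W \<rightarrow> \<int>\<^sub>d\<close>, because the
  exponent is a quadratic form and hence affine in \<open>u\<close> once the difference is taken. It vanishes
  unless the syndrome \<open>y \<mapsto> \<Sum>x\<in>X \<union> Z. \<Gamma> y x * h x\<close> is \<open>0 mod d\<close> on \<open>W\<close>, where \<open>h\<close> is the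
  difference of the two configurations on \<open>X \<union> Z\<close>; non-singularity of the \<open>W \<times> (X \<union> Z)\<close> submatrix
  then forces \<open>h = 0\<close>. Hence \<open>V\<^sub>\<Gamma>\<^sup>* E V\<^sub>\<Gamma>\<close> is a scalar whenever \<open>E\<close> has at most \<open>2f\<close>
  non-identity factors, and \<open>F\<^sub>1\<^sup>* F\<^sub>2\<close> is a linear combination of such \<open>E\<close> for \<open>F\<^sub>1, F\<^sub>2\<close> in
  the error space.\<close>

lemma finite_confs: "finite A \<Longrightarrow> finite (confs d A)"
proof -
  assume "finite A"
  have "confs d A = {f. \<forall>x. (x \<in> A \<longrightarrow> f x \<in> {..<d}) \<and> (x \<notin> A \<longrightarrow> f x = 0)}"
    by (auto simp: confs_def)
  then show ?thesis
    using finite_set_of_finite_funs[OF \<open>finite A\<close>, of "{..<d}" 0] by simp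
qed

lemma confs_empty: "confs d {} = {\<lambda>_. 0}"
  by (auto simp: confs_def)

lemma bij_betw_add_confs:
  assumes "A \<inter> B = {}"
  shows "bij_betw (\<lambda>(u, s). (\<lambda>x. u x + s x)) (confs d A \<times> confs d B) (confs d (A \<union> B))"
proof (rule bij_betwI[where g = "\<lambda>j. (\<lambda>x. if x \<in> A then j x else 0, \<lambda>x. if x \<in> B then j x else 0)"])
  show "\<And>p. p \<in> confs d A \<times> confs d B \<Longrightarrow>
      (\<lambda>j. (\<lambda>x. if x \<in> A then j x else 0, \<lambda>x. if x \<in> B then j x else 0))
        ((\<lambda>(u, s). (\<lambda>x. u x + s x)) p) = p"
    using assms by (auto simp: confs_def fun_eq_iff) (metis disjoint_iff)+
qed (use assms in \<open>auto simp: confs_def fun_eq_iff\<close>)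

lemma add_confs_eq_iff:
  assumes "A \<inter> B = {}" "u \<in> confs d A" "u' \<in> confs d A" "s \<in> confs d B" "s' \<in> confs d B"
  shows "(\<lambda>x. u x + s x) = (\<lambda>x. u' x + s' x) \<longleftrightarrow> u = u' \<and> s = s'"
  using inj_onD[OF bij_betw_imp_inj_on[OF bij_betw_add_confs[OF assms(1), of d]], of "(u, s)" "(u', s')"]
    assms(2-) by auto

lemma add_confs_mem:
  "A \<inter> B = {} \<Longrightarrow> u \<in> confs d A \<Longrightarrow> s \<in> confs d B \<Longrightarrow> (\<lambda>x. u x + s x) \<in> confs d (A \<union> B)"
  using bij_betw_apply[OF bij_betw_add_confs] by fastforce

lemma sum_confs_Un:
  assumes "A \<inter> B = {}" "finite A" "finite B"
  shows "(\<Sum>j\<in>confs d (A \<union> B). g j) = (\<Sum>u\<in>confs d A. \<Sum>s\<in>confs d B. g (\<lambda>x. u x + s x))"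
proof -
  have "(\<Sum>j\<in>confs d (A \<union> B). g j) = (\<Sum>(u, s)\<in>confs d A \<times> confs d B. g (\<lambda>x. u x + s x))"
    using sum.reindex_bij_betw[OF bij_betw_add_confs[OF assms(1)], of g] by (simp add: case_prod_unfold)
  also have "\<dots> = (\<Sum>u\<in>confs d A. \<Sum>s\<in>confs d B. g (\<lambda>x. u x + s x))"
    by (rule sum.cartesian_product[symmetric])
  finally show ?thesis .
qed

lemma sum_confs_singleton: "(\<Sum>u\<in>confs d {y}. g (u y)) = (\<Sum>k<d. g k)"
proof -
  have "bij_betw (\<lambda>k. (\<lambda>x. if x = y then k else 0)) {..<d} (confs d {y})"
    by (rule bij_betwI[where g = "\<lambda>u. u y"]) (auto simp: confs_def fun_eq_iff)
  from sum.reindex_bij_betw[OF this, of "\<lambda>u. g (u y)"] show ?thesis by simp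
qed

lemma sum_confs_prod:
  assumes "finite A"
  shows "(\<Sum>u\<in>confs d A. \<Prod>y\<in>A. g y (u y)) = (\<Prod>y\<in>A. \<Sum>k<d. (g y k :: 'b::comm_semiring_1))"
  using assms
proof (induction A rule: finite_induct)
  case empty
  then show ?case by (simp add: confs_empty)
next
  case (insert y A)
  have "(\<Sum>u\<in>confs d (insert y A). \<Prod>z\<in>insert y A. g z (u z))
      = (\<Sum>u\<in>confs d {y}. \<Sum>s\<in>confs d A. \<Prod>z\<in>insert y A. g z (u z + s z))"
    using sum_confs_Un[of "{y}" A "\<lambda>u. \<Prod>z\<in>insert y A. g z (u z)" d] insert(1,2) by simp
  also have "\<dots> = (\<Sum>u\<in>confs d {y}. \<Sum>s\<in>confs d A. g y (u y) * (\<Prod>z\<in>A. g z (s z)))"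
  proof (intro sum.cong refl)
    fix u s assume "u \<in> confs d {y}" "s \<in> confs d A"
    then have "\<forall>z\<in>A. u z = 0" "s y = 0" using insert(2) by (auto simp: confs_def)
    then show "(\<Prod>z\<in>insert y A. g z (u z + s z)) = g y (u y) * (\<Prod>z\<in>A. g z (s z))"
      using insert(1,2) by simp
  qed
  also have "\<dots> = (\<Sum>k<d. g y k) * (\<Sum>s\<in>confs d A. \<Prod>z\<in>A. g z (s z))"
    by (simp add: sum_product[symmetric] sum_confs_singleton)
  finally show ?case using insert by simp
qed

lemma confs_eq_if_cong:
  assumes "w \<in> confs d C" "w' \<in> confs d C" "\<forall>x\<in>C. (int (w x) - int (w' x)) mod int d = 0"
  shows "w = w'"
proof
  fix x
  show "w x = w' x"
  proof (cases "x \<in> C")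
    case True
    then have "int (w x) mod int d = int (w' x) mod int d"
      using assms(3) by (simp add: mod_eq_dvd_iff dvd_eq_mod_eq_0)
    then show ?thesis using True assms(1,2) by (simp add: confs_def)
  next
    case False
    then show ?thesis using assms(1,2) by (simp add: confs_def)
  qed
qed

definition phase :: "nat \<Rightarrow> int \<Rightarrow> complex" where
  "phase d q = exp (\<i> * complex_of_real (pi / real d) * of_int q)"

lemma phase_0 [simp]: "phase d 0 = 1"
  by (simp add: phase_def)

lemma phase_add: "phase d (a + b) = phase d a * phase d b"
  by (simp only: phase_def exp_add[symmetric] of_int_add distrib_left)

lemma cnj_phase: "cnj (phase d a) = phase d (- a)"
  by (simp add: phase_def exp_cnj)

lemma phase_sum: "phase d (\<Sum>i\<in>A. f i) = (\<Prod>i\<in>A. phase d (f i))"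
  by (induction A rule: infinite_finite_induct) (simp_all add: phase_add)

lemma phase_mult_of_nat: "phase d (int k * a) = phase d a ^ k"
  unfolding phase_def by (simp add: exp_of_nat_mult[symmetric] algebra_simps)

lemma phase_double_eq_1_iff:
  assumes "d > 0"
  shows "phase d (2 * a) = 1 \<longleftrightarrow> a mod int d = 0"
proof -
  have "phase d (2 * a) = 1 \<longleftrightarrow> (\<exists>n::int. pi / real d * (2 * of_int a) = of_int (2 * n) * pi)"
    unfolding phase_def exp_eq_1 by simp
  also have "\<dots> \<longleftrightarrow> (\<exists>n::int. real_of_int a = real d * of_int n)"
    using assms pi_gt_zero by (intro ex_cong1) (auto simp: field_simps)
  also have "\<dots> \<longleftrightarrow> int d dvd a"
    by (metis dvd_def of_int_eq_iff of_int_mult of_int_of_nat_eq)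
  finally show ?thesis by (simp add: dvd_eq_mod_eq_0)
qed

lemma sum_phase_multiples:
  assumes "d > 0"
  shows "(\<Sum>k<d. phase d (2 * int k * a)) = (if a mod int d = 0 then of_nat d else 0)"
proof -
  define \<zeta> where "\<zeta> = phase d (2 * a)"
  have powers: "phase d (2 * int k * a) = \<zeta> ^ k" for k
    using phase_mult_of_nat[of d k "2 * a"] by (simp add: \<zeta>_def mult_ac)
  show ?thesis
  proof (cases "a mod int d = 0")
    case True
    then have "\<zeta> = 1" using assms by (simp add: \<zeta>_def phase_double_eq_1_iff)
    then show ?thesis using True by (simp add: powers)
  next
    case False
    have "\<zeta> ^ d = 1"
      using assms phase_double_eq_1_iff[of d "int d * a"] by (simp flip: powers add: mult_ac)
    moreover have "\<zeta> \<noteq> 1"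
      using assms False by (simp add: \<zeta>_def phase_double_eq_1_iff)
    ultimately show ?thesis using False by (simp add: powers geometric_sum)
  qed
qed

definition quad_form :: "'a set \<Rightarrow> ('a \<Rightarrow> 'a \<Rightarrow> int) \<Rightarrow> ('a \<Rightarrow> int) \<Rightarrow> int" where
  "quad_form S G p = (\<Sum>x\<in>S. \<Sum>y\<in>S. p x * G x y * p y)"

lemma quad_form_add:
  assumes "\<forall>x\<in>S. \<forall>y\<in>S. G x y = G y x"
  shows "quad_form S G (\<lambda>x. v x + u x)
    = quad_form S G v + quad_form S G u + 2 * (\<Sum>y\<in>S. u y * (\<Sum>x\<in>S. G y x * v x))"
proof -
  have "(\<Sum>x\<in>S. \<Sum>y\<in>S. v x * G x y * u y) = (\<Sum>y\<in>S. \<Sum>x\<in>S. u y * (G y x * v x))"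
    using assms by (subst sum.swap) (intro sum.cong refl, simp add: mult_ac)
  then show ?thesis
    unfolding quad_form_def
    by (simp add: algebra_simps sum.distrib sum_distrib_left)
qed

lemma quad_form_shift_diff:
  assumes "finite S" "\<forall>x\<in>S. \<forall>y\<in>S. G x y = G y x" "W \<subseteq> S" "C \<subseteq> S"
    and "\<forall>x. x \<notin> W \<longrightarrow> u x = 0" "\<forall>x. x \<notin> C \<longrightarrow> w x = w' x"
  shows "quad_form S G (\<lambda>x. w x + u x) - quad_form S G (\<lambda>x. w' x + u x)
    = quad_form S G w - quad_form S G w' + 2 * (\<Sum>y\<in>W. u y * (\<Sum>x\<in>C. G y x * (w x - w' x)))"
proof -
  have "(\<Sum>y\<in>S. u y * (\<Sum>x\<in>S. G y x * w x)) - (\<Sum>y\<in>S. u y * (\<Sum>x\<in>S. G y x * w' x))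
      = (\<Sum>y\<in>S. u y * (\<Sum>x\<in>S. G y x * (w x - w' x)))"
    by (simp add: sum_subtractf[symmetric] right_diff_distrib[symmetric])
  also have "\<dots> = (\<Sum>y\<in>W. u y * (\<Sum>x\<in>S. G y x * (w x - w' x)))"
    using assms(1,3,5) by (intro sum.mono_neutral_right) auto
  also have "\<dots> = (\<Sum>y\<in>W. u y * (\<Sum>x\<in>C. G y x * (w x - w' x)))"
    using assms(1,4,6) by (intro sum.cong refl arg_cong2[where f = "(*)"] sum.mono_neutral_right) auto
  finally show ?thesis
    using quad_form_add[OF assms(2), of w u] quad_form_add[OF assms(2), of w' u] by simp
qed

lemma sum_confs_phase_quad_form_shift:
  assumes "d > 0" "finite S" "\<forall>x\<in>S. \<forall>y\<in>S. G x y = G y x" "W \<subseteq> S" "C \<subseteq> S"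
    and "\<forall>x. x \<notin> C \<longrightarrow> w x = w' x"
  shows "(\<Sum>u\<in>confs d W. phase d (quad_form S G (\<lambda>x. w x + int (u x))
                                  - quad_form S G (\<lambda>x. w' x + int (u x))))
    = phase d (quad_form S G w - quad_form S G w')
      * (\<Prod>y\<in>W. if (\<Sum>x\<in>C. G y x * (w x - w' x)) mod int d = 0 then of_nat d else 0)"
proof -
  define L where "L y = (\<Sum>x\<in>C. G y x * (w x - w' x))" for y
  have "finite W" using assms(2,4) finite_subset by blast
  have "phase d (quad_form S G (\<lambda>x. w x + int (u x)) - quad_form S G (\<lambda>x. w' x + int (u x)))
      = phase d (quad_form S G w - quad_form S G w') * (\<Prod>y\<in>W. phase d (2 * int (u y) * L y))"
    if "u \<in> confs d W" for u
  proof -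
    have "\<forall>x. x \<notin> W \<longrightarrow> int (u x) = 0" using that by (simp add: confs_def)
    from quad_form_shift_diff[OF assms(2-5) this assms(6)] show ?thesis
      by (simp add: L_def phase_add phase_sum sum_distrib_left mult.assoc)
  qed
  then have "(\<Sum>u\<in>confs d W. phase d (quad_form S G (\<lambda>x. w x + int (u x))
                                  - quad_form S G (\<lambda>x. w' x + int (u x))))
      = phase d (quad_form S G w - quad_form S G w')
        * (\<Sum>u\<in>confs d W. \<Prod>y\<in>W. phase d (2 * int (u y) * L y))"
    by (simp add: sum_distrib_left)
  also have "(\<Sum>u\<in>confs d W. \<Prod>y\<in>W. phase d (2 * int (u y) * L y))
      = (\<Prod>y\<in>W. \<Sum>k<d. phase d (2 * int k * L y))"
    by (rule sum_confs_prod[OF \<open>finite W\<close>])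
  finally show ?thesis
    using assms(1) by (simp add: sum_phase_multiples L_def)
qed

definition nonsingular_submatrix :: "nat \<Rightarrow> ('a \<Rightarrow> 'a \<Rightarrow> int) \<Rightarrow> 'a set \<Rightarrow> 'a set \<Rightarrow> bool" where
  "nonsingular_submatrix d G R C \<longleftrightarrow>
     (\<forall>h. (\<forall>y\<in>R. (\<Sum>x\<in>C. G y x * h x) mod int d = 0) \<longrightarrow> (\<forall>x\<in>C. h x mod int d = 0))"

lemma graph_code_kernel_eq:
  "graph_code_kernel d X Y \<Gamma> jY jX
    = of_real (real d powr (- real (card Y) / 2)) * phase d (quad_form (X \<union> Y) \<Gamma> (\<lambda>x. int (jX x + jY x)))"
  by (simp add: graph_code_kernel_def Let_def phase_def quad_form_def)

lemma sum_cnj_graph_code_kernel_eq: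
  assumes "d > 0" "finite X" "finite Y" "\<forall>x\<in>X \<union> Y. \<forall>y\<in>X \<union> Y. \<Gamma> x y = \<Gamma> y x" "Z \<subseteq> Y"
    and "p \<in> confs d X" "q \<in> confs d X" "s \<in> confs d Z" "t \<in> confs d Z"
  defines "a \<equiv> \<lambda>x. int (q x + t x)" and "b \<equiv> \<lambda>x. int (p x + s x)"
  shows "(\<Sum>u\<in>confs d (Y - Z). cnj (graph_code_kernel d X Y \<Gamma> (\<lambda>x. u x + s x) p)
                                * graph_code_kernel d X Y \<Gamma> (\<lambda>x. u x + t x) q)
    = of_real (real d powr - real (card Y)) * phase d (quad_form (X \<union> Y) \<Gamma> a - quad_form (X \<union> Y) \<Gamma> b)
      * (\<Prod>y\<in>Y - Z. if (\<Sum>x\<in>X \<union> Z. \<Gamma> y x * (a x - b x)) mod int d = 0 then of_nat d else 0)"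
proof -
  have powr_half_squared:
    "real d powr (- real (card Y) / 2) * real d powr (- real (card Y) / 2) = real d powr - real (card Y)"
    by (simp flip: powr_add)
  have "cnj (graph_code_kernel d X Y \<Gamma> (\<lambda>x. u x + s x) p) * graph_code_kernel d X Y \<Gamma> (\<lambda>x. u x + t x) q
      = of_real (real d powr - real (card Y))
        * phase d (quad_form (X \<union> Y) \<Gamma> (\<lambda>x. a x + int (u x)) - quad_form (X \<union> Y) \<Gamma> (\<lambda>x. b x + int (u x)))"
    for u
    by (simp add: graph_code_kernel_eq cnj_phase a_def b_def phase_add[symmetric] algebra_simps
        flip: powr_half_squared of_real_mult)
  moreover have "\<forall>x. x \<notin> X \<union> Z \<longrightarrow> a x = b x"
    using assms(6-9) by (simp add: a_def b_def confs_def)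
  ultimately show ?thesis
    using sum_confs_phase_quad_form_shift[OF assms(1) _ assms(4), of "Y - Z" "X \<union> Z" a b] assms(2,3,5)
    by (auto simp: sum_distrib_left[symmetric] mult.assoc)
qed

lemma sum_cnj_graph_code_kernel:
  assumes "d > 0" "finite X" "finite Y" "X \<inter> Y = {}" "\<forall>x\<in>X \<union> Y. \<forall>y\<in>X \<union> Y. \<Gamma> x y = \<Gamma> y x"
    and "Z \<subseteq> Y" "nonsingular_submatrix d \<Gamma> (Y - Z) (X \<union> Z)"
    and "p \<in> confs d X" "q \<in> confs d X" "s \<in> confs d Z" "t \<in> confs d Z"
  shows "(\<Sum>u\<in>confs d (Y - Z). cnj (graph_code_kernel d X Y \<Gamma> (\<lambda>x. u x + s x) p)
                                * graph_code_kernel d X Y \<Gamma> (\<lambda>x. u x + t x) q)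
    = (if p = q \<and> s = t then of_real (real d powr - real (card Y)) * of_nat d ^ card (Y - Z) else 0)"
proof -
  define a where "a = (\<lambda>x. q x + t x)"
  define b where "b = (\<lambda>x. p x + s x)"
  define L where "L y = (\<Sum>x\<in>X \<union> Z. \<Gamma> y x * (int (a x) - int (b x)))" for y
  have "X \<inter> Z = {}" using assms(4,6) by blast
  have "(\<Sum>u\<in>confs d (Y - Z). cnj (graph_code_kernel d X Y \<Gamma> (\<lambda>x. u x + s x) p)
                                * graph_code_kernel d X Y \<Gamma> (\<lambda>x. u x + t x) q)
      = of_real (real d powr - real (card Y))
        * phase d (quad_form (X \<union> Y) \<Gamma> a - quad_form (X \<union> Y) \<Gamma> b)
        * (\<Prod>y\<in>Y - Z. if L y mod int d = 0 then of_nat d else 0)"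
    unfolding sum_cnj_graph_code_kernel_eq[OF assms(1-3,5,6,8-11)] a_def b_def L_def ..
  also have "\<dots> = (if p = q \<and> s = t then of_real (real d powr - real (card Y)) * of_nat d ^ card (Y - Z) else 0)"
  proof (cases "p = q \<and> s = t")
    case True
    then have "a = b" by (simp add: a_def b_def)
    then show ?thesis using True by (simp add: L_def)
  next
    case False
    have "a \<in> confs d (X \<union> Z)" "b \<in> confs d (X \<union> Z)"
      using \<open>X \<inter> Z = {}\<close> assms(8-11) unfolding a_def b_def by (simp_all add: add_confs_mem)
    moreover have "a = b \<longleftrightarrow> p = q \<and> s = t"
      using add_confs_eq_iff[OF \<open>X \<inter> Z = {}\<close>] assms(8-11) by (auto simp: a_def b_def)
    moreover have "\<forall>x\<in>X \<union> Z. (int (a x) - int (b x)) mod int d = 0" if "\<forall>y\<in>Y - Z. L y mod int d = 0"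
      using assms(7) that unfolding nonsingular_submatrix_def L_def
      by (blast dest: spec[of _ "\<lambda>x. int (a x) - int (b x)"])
    ultimately obtain y where "y \<in> Y - Z" "L y mod int d \<noteq> 0"
      using False confs_eq_if_cong by blast
    then show ?thesis using False assms(3) by (auto intro: prod_zero)
  qed
  finally show ?thesis .
qed

definition code_matrix :: "nat \<Rightarrow> 'a set \<Rightarrow> 'a set \<Rightarrow> ('a \<Rightarrow> 'a \<Rightarrow> int)
    \<Rightarrow> (('a \<Rightarrow> nat) \<Rightarrow> ('a \<Rightarrow> nat) \<Rightarrow> complex) \<Rightarrow> ('a \<Rightarrow> nat) \<Rightarrow> ('a \<Rightarrow> nat) \<Rightarrow> complex" where
  "code_matrix d X Y \<Gamma> G p q = (\<Sum>a\<in>confs d Y. \<Sum>b\<in>confs d Y.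
      cnj (graph_code_kernel d X Y \<Gamma> a p) * G a b * graph_code_kernel d X Y \<Gamma> b q)"

definition scalar_on_code :: "nat \<Rightarrow> 'a set \<Rightarrow> 'a set \<Rightarrow> ('a \<Rightarrow> 'a \<Rightarrow> int)
    \<Rightarrow> (('a \<Rightarrow> nat) \<Rightarrow> ('a \<Rightarrow> nat) \<Rightarrow> complex) \<Rightarrow> complex \<Rightarrow> bool" where
  "scalar_on_code d X Y \<Gamma> G c \<longleftrightarrow>
     (\<forall>p\<in>confs d X. \<forall>q\<in>confs d X. code_matrix d X Y \<Gamma> G p q = (if p = q then c else 0))"

lemma inner_graph_code_apply_op:
  "inner_W d Y (graph_code d X Y \<Gamma> \<phi>1) (apply_op d Y G (graph_code d X Y \<Gamma> \<phi>2))
    = (\<Sum>p\<in>confs d X. \<Sum>q\<in>confs d X. cnj (\<phi>1 p) * \<phi>2 q * code_matrix d X Y \<Gamma> G p q)"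
proof -
  define K where "K = graph_code_kernel d X Y \<Gamma>"
  have "inner_W d Y (graph_code d X Y \<Gamma> \<phi>1) (apply_op d Y G (graph_code d X Y \<Gamma> \<phi>2))
      = (\<Sum>a\<in>confs d Y. \<Sum>b\<in>confs d Y. \<Sum>q\<in>confs d X. \<Sum>p\<in>confs d X.
          cnj (\<phi>1 p) * \<phi>2 q * (cnj (K a p) * G a b * K b q))"
    unfolding inner_W_def apply_op_def graph_code_def K_def
    by (simp add: sum_product sum_distrib_left mult_ac)
  also have "\<dots> = (\<Sum>q\<in>confs d X. \<Sum>p\<in>confs d X. \<Sum>a\<in>confs d Y. \<Sum>b\<in>confs d Y.
          cnj (\<phi>1 p) * \<phi>2 q * (cnj (K a p) * G a b * K b q))"
    by (simp only: sum.swap[where A = "confs d Y" and B = "confs d X"])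
  also have "\<dots> = (\<Sum>p\<in>confs d X. \<Sum>q\<in>confs d X. cnj (\<phi>1 p) * \<phi>2 q * code_matrix d X Y \<Gamma> G p q)"
    unfolding code_matrix_def K_def by (subst sum.swap) (simp add: sum_distrib_left)
  finally show ?thesis .
qed

lemma inner_graph_code_apply_op_scalar:
  assumes "finite X" "scalar_on_code d X Y \<Gamma> G c"
  shows "inner_W d Y (graph_code d X Y \<Gamma> \<phi>1) (apply_op d Y G (graph_code d X Y \<Gamma> \<phi>2))
    = inner_W d X \<phi>1 \<phi>2 * c"
proof -
  have "(\<Sum>q\<in>confs d X. cnj (\<phi>1 p) * \<phi>2 q * code_matrix d X Y \<Gamma> G p q) = cnj (\<phi>1 p) * \<phi>2 p * c"
    if "p \<in> confs d X" for p
  proof -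
    have "(\<Sum>q\<in>confs d X. cnj (\<phi>1 p) * \<phi>2 q * code_matrix d X Y \<Gamma> G p q)
        = (\<Sum>q\<in>confs d X. if p = q then cnj (\<phi>1 p) * \<phi>2 q * c else 0)"
      using that assms(2) unfolding scalar_on_code_def by (intro sum.cong) auto
    then show ?thesis using that assms(1) by (simp add: finite_confs)
  qed
  then show ?thesis
    unfolding inner_graph_code_apply_op by (simp add: inner_W_def sum_distrib_right)
qed

lemma scalar_on_code_cong:
  assumes "\<forall>a\<in>confs d Y. \<forall>b\<in>confs d Y. G a b = G' a b"
  shows "scalar_on_code d X Y \<Gamma> G c \<longleftrightarrow> scalar_on_code d X Y \<Gamma> G' c"
  using assms unfolding scalar_on_code_def code_matrix_def by (simp cong: sum.cong)

lemma scalar_on_code_lincomb: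
  assumes "\<forall>i\<in>I. \<exists>c. scalar_on_code d X Y \<Gamma> (F i) c"
  shows "\<exists>c. scalar_on_code d X Y \<Gamma> (\<lambda>a b. \<Sum>i\<in>I. w i * F i a b) c"
proof -
  obtain c where c: "\<forall>i\<in>I. scalar_on_code d X Y \<Gamma> (F i) (c i)"
    using bchoice[OF assms] by blast
  have "code_matrix d X Y \<Gamma> (\<lambda>a b. \<Sum>i\<in>I. w i * F i a b) p q
      = (\<Sum>i\<in>I. w i * code_matrix d X Y \<Gamma> (F i) p q)" for p q
    unfolding code_matrix_def
    by (simp add: sum_distrib_left sum_distrib_right mult_ac sum.swap[where B = I])
  then have "scalar_on_code d X Y \<Gamma> (\<lambda>a b. \<Sum>i\<in>I. w i * F i a b) (\<Sum>i\<in>I. w i * c i)"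
    using c unfolding scalar_on_code_def by (simp add: if_distrib cong: sum.cong)
  then show ?thesis ..
qed

lemma tensor_op_add_confs:
  assumes "finite Y" "Z \<subseteq> Y" "\<forall>y\<in>Y - Z. is_id_mat d (C y)"
    and "u \<in> confs d (Y - Z)" "v \<in> confs d (Y - Z)" "s \<in> confs d Z" "t \<in> confs d Z"
  shows "tensor_op Y C (\<lambda>x. u x + s x) (\<lambda>x. v x + t x)
    = (if u = v then \<Prod>y\<in>Z. C y (s y) (t y) else 0)"
proof -
  have "finite Z" using assms(1,2) finite_subset by blast
  have "tensor_op Y C (\<lambda>x. u x + s x) (\<lambda>x. v x + t x)
      = (\<Prod>y\<in>Y - Z. C y (u y + s y) (v y + t y)) * (\<Prod>y\<in>Z. C y (u y + s y) (v y + t y))"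
    unfolding tensor_op_def by (rule prod.subset_diff[OF assms(2,1)])
  also have "\<dots> = (\<Prod>y\<in>Y - Z. C y (u y) (v y)) * (\<Prod>y\<in>Z. C y (s y) (t y))"
    using assms(4-7) by (intro arg_cong2[where f = "(*)"] prod.cong) (auto simp: confs_def)
  also have "(\<Prod>y\<in>Y - Z. C y (u y) (v y)) = (if u = v then 1 else 0)"
  proof (cases "u = v")
    case True
    then show ?thesis using assms(3,4) by (simp add: confs_def is_id_mat_def)
  next
    case False
    then obtain y where "u y \<noteq> v y" by blast
    moreover have "y \<in> Y - Z" using calculation assms(4,5) unfolding confs_def by force
    ultimately show ?thesis
      using False assms(1,3-5) by (auto simp: confs_def is_id_mat_def intro!: prod_zero)
  qed
  finally show ?thesis by simp
qed

lemma code_matrix_tensor_op: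
  assumes "finite Y" "Z \<subseteq> Y" "\<forall>y\<in>Y - Z. is_id_mat d (C y)"
  shows "code_matrix d X Y \<Gamma> (tensor_op Y C) p q
    = (\<Sum>s\<in>confs d Z. \<Sum>t\<in>confs d Z. (\<Prod>y\<in>Z. C y (s y) (t y)) *
        (\<Sum>u\<in>confs d (Y - Z). cnj (graph_code_kernel d X Y \<Gamma> (\<lambda>x. u x + s x) p)
                               * graph_code_kernel d X Y \<Gamma> (\<lambda>x. u x + t x) q))"
proof -
  define K where "K = graph_code_kernel d X Y \<Gamma>"
  define W where "W = Y - Z"
  have fin: "finite W" "finite Z" "W \<inter> Z = {}" "W \<union> Z = Y"
    using assms(1,2) finite_subset by (auto simp: W_def)
  have "code_matrix d X Y \<Gamma> (tensor_op Y C) p q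
      = (\<Sum>u\<in>confs d W. \<Sum>s\<in>confs d Z. \<Sum>v\<in>confs d W. \<Sum>t\<in>confs d Z.
          cnj (K (\<lambda>x. u x + s x) p) * tensor_op Y C (\<lambda>x. u x + s x) (\<lambda>x. v x + t x)
          * K (\<lambda>x. v x + t x) q)"
    unfolding code_matrix_def K_def fin(4)[symmetric] sum_confs_Un[OF fin(3,1,2)] ..
  also have "\<dots> = (\<Sum>u\<in>confs d W. \<Sum>s\<in>confs d Z. \<Sum>t\<in>confs d Z. \<Sum>v\<in>confs d W.
          if u = v then cnj (K (\<lambda>x. u x + s x) p) * (\<Prod>y\<in>Z. C y (s y) (t y))
            * K (\<lambda>x. u x + t x) q else 0)"
    using tensor_op_add_confs[OF assms] unfolding W_def
    by (intro sum.cong[OF refl]) (subst sum.swap, intro sum.cong[OF refl], simp)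
  also have "\<dots> = (\<Sum>s\<in>confs d Z. \<Sum>t\<in>confs d Z. (\<Prod>y\<in>Z. C y (s y) (t y)) *
        (\<Sum>u\<in>confs d W. cnj (K (\<lambda>x. u x + s x) p) * K (\<lambda>x. u x + t x) q))"
    using fin(1) by (simp add: finite_confs sum_distrib_left mult_ac sum.swap[where A = "confs d W"])
  finally show ?thesis unfolding K_def W_def .
qed

lemma scalar_on_code_tensor_op:
  assumes "d > 0" "finite X" "finite Y" "X \<inter> Y = {}" "\<forall>x\<in>X \<union> Y. \<forall>y\<in>X \<union> Y. \<Gamma> x y = \<Gamma> y x"
    and "Z \<subseteq> Y" "nonsingular_submatrix d \<Gamma> (Y - Z) (X \<union> Z)" "\<forall>y\<in>Y - Z. is_id_mat d (C y)"
  shows "\<exists>c. scalar_on_code d X Y \<Gamma> (tensor_op Y C) c"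
proof -
  define R where "R = complex_of_real (real d powr - real (card Y)) * of_nat d ^ card (Y - Z)"
  have "finite Z" using assms(3,6) finite_subset by blast
  have "code_matrix d X Y \<Gamma> (tensor_op Y C) p q
      = (if p = q then \<Sum>s\<in>confs d Z. (\<Prod>y\<in>Z. C y (s y) (s y)) * R else 0)"
    if "p \<in> confs d X" "q \<in> confs d X" for p q
    using that \<open>finite Z\<close>
    by (simp add: code_matrix_tensor_op[OF assms(3,6,8)] sum_cnj_graph_code_kernel[OF assms(1-7)]
        R_def finite_confs if_distrib[of "(*) _"] conj_commute cong: if_cong)
  then show ?thesis unfolding scalar_on_code_def by blast
qed

definition adj_mult_mat :: "nat \<Rightarrow> (nat \<Rightarrow> nat \<Rightarrow> complex) \<Rightarrow> (nat \<Rightarrow> nat \<Rightarrow> complex) \<Rightarrow> nat \<Rightarrow> nat \<Rightarrow> complex" where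
  "adj_mult_mat d P Q i k = (\<Sum>c<d. cnj (P c i) * Q c k)"

lemma is_id_mat_adj_mult_mat:
  assumes "is_id_mat d P" "is_id_mat d Q"
  shows "is_id_mat d (adj_mult_mat d P Q)"
  unfolding is_id_mat_def
proof (intro allI impI)
  fix i k assume "i < d" "k < d"
  then have "adj_mult_mat d P Q i k = (\<Sum>c<d. if c = k then (if i = k then 1 else 0) else 0)"
    unfolding adj_mult_mat_def using assms by (intro sum.cong refl) (auto simp: is_id_mat_def)
  then show "adj_mult_mat d P Q i k = (if i = k then 1 else 0)" using \<open>k < d\<close> by simp
qed

lemma card_not_id_adj_mult_mat_le:
  assumes "finite Y"
  shows "card {y\<in>Y. \<not> is_id_mat d (adj_mult_mat d (A y) (B y))}
    \<le> card {y\<in>Y. \<not> is_id_mat d (A y)} + card {y\<in>Y. \<not> is_id_mat d (B y)}"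
proof -
  have "card {y\<in>Y. \<not> is_id_mat d (adj_mult_mat d (A y) (B y))}
      \<le> card ({y\<in>Y. \<not> is_id_mat d (A y)} \<union> {y\<in>Y. \<not> is_id_mat d (B y)})"
    using assms is_id_mat_adj_mult_mat by (intro card_mono) auto
  also have "\<dots> \<le> card {y\<in>Y. \<not> is_id_mat d (A y)} + card {y\<in>Y. \<not> is_id_mat d (B y)}"
    by (rule card_Un_le)
  finally show ?thesis .
qed

lemma adj_comp_tensor_op:
  assumes "finite Y" "a \<in> confs d Y" "b \<in> confs d Y"
  shows "adj_comp d Y (tensor_op Y A) (tensor_op Y B) a b = tensor_op Y (\<lambda>y. adj_mult_mat d (A y) (B y)) a b"
  using assms
  by (simp add: adj_comp_def tensor_op_def adj_mult_mat_def prod.distrib[symmetric]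
      sum_confs_prod[OF assms(1), of "\<lambda>y c. cnj (A y c (a y)) * B y c (b y)"])

lemma adj_comp_lincomb:
  assumes "finite I" "finite J" "a \<in> confs d Y" "b \<in> confs d Y"
  shows "adj_comp d Y (\<lambda>j' j. \<Sum>k\<in>I. c1 k * F1 k j' j) (\<lambda>j' j. \<Sum>l\<in>J. c2 l * F2 l j' j) a b
    = (\<Sum>(k, l)\<in>I \<times> J. cnj (c1 k) * c2 l * adj_comp d Y (F1 k) (F2 l) a b)"
  using assms
  by (simp add: adj_comp_def sum.cartesian_product[symmetric] sum_product sum_distrib_left
      mult_ac sum.swap[where A = "confs d Y"] del: cnj_prod)

lemma scalar_on_code_adj_comp:
  assumes "d > 0" "finite X" "finite Y" "X \<inter> Y = {}" "\<forall>x\<in>X \<union> Y. \<forall>y\<in>X \<union> Y. \<Gamma> x y = \<Gamma> y x"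
    and "\<forall>Z. Z \<subseteq> Y \<and> card Z \<le> 2 * f \<longrightarrow> nonsingular_submatrix d \<Gamma> (Y - Z) (X \<union> Z)"
    and "F1 \<in> error_space d Y f" "F2 \<in> error_space d Y f"
  shows "\<exists>c. scalar_on_code d X Y \<Gamma> (adj_comp d Y F1 F2) c"
proof -
  obtain N1 :: nat and c1 A where A: "\<forall>k<N1. card {y\<in>Y. \<not> is_id_mat d (A k y)} \<le> f"
    and F1: "F1 = (\<lambda>j' j. \<Sum>k<N1. c1 k * tensor_op Y (A k) j' j)"
    using assms(7) unfolding error_space_def mem_Collect_eq by blast
  obtain N2 :: nat and c2 B where B: "\<forall>l<N2. card {y\<in>Y. \<not> is_id_mat d (B l y)} \<le> f"
    and F2: "F2 = (\<lambda>j' j. \<Sum>l<N2. c2 l * tensor_op Y (B l) j' j)"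
    using assms(8) unfolding error_space_def mem_Collect_eq by blast
  define T where "T kl = tensor_op Y (\<lambda>y. adj_mult_mat d (A (fst kl) y) (B (snd kl) y))" for kl
  have expansion: "\<forall>a\<in>confs d Y. \<forall>b\<in>confs d Y. adj_comp d Y F1 F2 a b
      = (\<Sum>kl\<in>{..<N1} \<times> {..<N2}. cnj (c1 (fst kl)) * c2 (snd kl) * T kl a b)"
    unfolding F1 F2 T_def
    by (simp add: adj_comp_lincomb adj_comp_tensor_op[OF assms(3)] case_prod_unfold)
  have "\<forall>kl\<in>{..<N1} \<times> {..<N2}. \<exists>c. scalar_on_code d X Y \<Gamma> (T kl) c"
  proof
    fix kl assume kl: "kl \<in> {..<N1} \<times> {..<N2}"
    define Z where "Z = {y\<in>Y. \<not> is_id_mat d (adj_mult_mat d (A (fst kl) y) (B (snd kl) y))}"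
    have "card Z \<le> card {y\<in>Y. \<not> is_id_mat d (A (fst kl) y)} + card {y\<in>Y. \<not> is_id_mat d (B (snd kl) y)}"
      unfolding Z_def by (rule card_not_id_adj_mult_mat_le[OF assms(3)])
    also have "\<dots> \<le> 2 * f" using A B kl by fastforce
    finally have nonsingular: "nonsingular_submatrix d \<Gamma> (Y - Z) (X \<union> Z)"
      using assms(6) by (simp add: Z_def)
    show "\<exists>c. scalar_on_code d X Y \<Gamma> (T kl) c"
      unfolding T_def by (rule scalar_on_code_tensor_op[OF assms(1-5) _ nonsingular]) (auto simp: Z_def)
  qed
  from scalar_on_code_lincomb[OF this, of "\<lambda>kl. cnj (c1 (fst kl)) * c2 (snd kl)"]
  show ?thesis unfolding scalar_on_code_cong[OF expansion] .
qed

theorem corollary1: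
  fixes d f :: nat and X Y :: "'a set" and \<Gamma> :: "'a \<Rightarrow> 'a \<Rightarrow> int"
  assumes "d \<ge> 2"
    and "finite X" and "finite Y" and "X \<inter> Y = {}"
    and "\<forall>x\<in>X \<union> Y. \<forall>y\<in>X \<union> Y. 0 \<le> \<Gamma> x y \<and> \<Gamma> x y < int d"
    and "\<forall>x\<in>X \<union> Y. \<forall>y\<in>X \<union> Y. \<Gamma> x y = \<Gamma> y x"
    and "\<forall>x\<in>X \<union> Y. \<Gamma> x x = 0"
    and "\<forall>Z. Z \<subseteq> Y \<and> card Z \<le> 2 * f \<longrightarrow>
           (\<forall>h :: 'a \<Rightarrow> int.
              (\<forall>y\<in>Y - Z. (\<Sum>x\<in>X \<union> Z. \<Gamma> y x * h x) mod int d = 0) \<longrightarrow>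
              (\<forall>x\<in>X \<union> Z. h x mod int d = 0))"
  shows "corrects_errors d X Y (graph_code d X Y \<Gamma>) f"
proof -
  \<comment> \<open>The bounds on the entries of \<open>\<Gamma>\<close> and its zero diagonal are not needed.\<close>
  have "d > 0" using assms(1) by simp
  have nonsingular: "\<forall>Z. Z \<subseteq> Y \<and> card Z \<le> 2 * f \<longrightarrow> nonsingular_submatrix d \<Gamma> (Y - Z) (X \<union> Z)"
    using assms(8) unfolding nonsingular_submatrix_def by blast
  define \<omega> where "\<omega> G = (SOME c. scalar_on_code d X Y \<Gamma> G c)" for G
  show ?thesis
    unfolding corrects_errors_def
  proof (intro exI[of _ \<omega>] ballI allI)
    fix F1 F2 \<phi>1 \<phi>2
    assume "F1 \<in> error_space d Y f" "F2 \<in> error_space d Y f"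
    then have "scalar_on_code d X Y \<Gamma> (adj_comp d Y F1 F2) (\<omega> (adj_comp d Y F1 F2))"
      unfolding \<omega>_def
      by (rule someI_ex[OF scalar_on_code_adj_comp[OF \<open>d > 0\<close> assms(2-4,6) nonsingular]])
    then show "inner_W d Y (graph_code d X Y \<Gamma> \<phi>1) (apply_op d Y (adj_comp d Y F1 F2) (graph_code d X Y \<Gamma> \<phi>2))
        = inner_W d X \<phi>1 \<phi>2 * \<omega> (adj_comp d Y F1 F2)"
      by (rule inner_graph_code_apply_op_scalar[OF assms(2)])
  qed
qed

end
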